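(* Let $(X,\|\cdot\|)$ be a Banach space, $B_X=\{x\in X:\|x\|\le1\}$, and let $B\subset X\setminus B_X$ be nonempty with $\mathrm{dist}(B,B_X)\ge1$. Suppose the ordered pair $(B_X,B)$ has the $UC$ property and there exists $p\in B$ with $\mathrm{dist}(p,B_X)=\mathrm{dist}(B,B_X)$. If $\{x_n\}_{n=1}^\infty,\{z_n\}_{n=1}^\infty\subset B_X$ and real numbers $\lambda_n$ satisfy $\lim_{n\to\infty}\left\|\frac{x_n+z_n}{2}\right\|=1$ and $x_n+z_n=|\lambda_n|\,p$ for all $n$, then $\lim_{n\to\infty}\|x_n-z_n\|=0$.
   Context: $\mathrm{dist}(A,B)=\inf\{\|a-b\|:a\in A,b\in B\}$ and $\mathrm{dist}(p,A)=\mathrm{dist}(\{p\},A)$. The ordered pair $(A,B)$ has the $UC$ property if for all sequences $\{x_n\},\{z_n\}\subset A$, $\{y_n\}\subset B$ with $\lim_n\|x_n-y_n\|=\lim_n\|z_n-y_n\|=\mathrm{dist}(A,B)$ one has $\lim_n\|x_n-z_n\|=0$. *)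

theory Defs
  imports "HOL-Analysis.Analysis"
begin

text \<open>The UC property of an ordered pair (A,B); the distance of sets is the library's setdist
  (the infimum of norm (a - b) over a in A, b in B, for nonempty A, B).\<close>
definition UC_property :: "'a::real_normed_vector set \<Rightarrow> 'a set \<Rightarrow> bool" where
  "UC_property A B \<longleftrightarrow>
     (\<forall>x z y. (\<forall>n::nat. x n \<in> A \<and> z n \<in> A \<and> y n \<in> B) \<longrightarrow>
        (\<lambda>n. norm (x n - y n)) \<longlonglongrightarrow> setdist A B \<longrightarrow>
        (\<lambda>n. norm (z n - y n)) \<longlonglongrightarrow> setdist A B \<longrightarrow>
        (\<lambda>n. norm (x n - z n)) \<longlonglongrightarrow> 0)"

end

theory Submission
  imports Defs
begin

text \<open>The UC property is applied with the constant sequence \<open>p\<close>. Since \<open>dist(p, B\<^sub>X) = \<parallel>p\<parallel> - 1\<close>,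
  the hypothesis on \<open>p\<close> gives \<open>\<parallel>p\<parallel> = 1 + dist(B, B\<^sub>X) \<ge> 2\<close>. Writing \<open>x\<^sub>n = \<bar>\<lambda>\<^sub>n\<bar> p - z\<^sub>n\<close>,
  the triangle inequality bounds \<open>\<parallel>x\<^sub>n - p\<parallel>\<close> by \<open>\<bar>\<bar>\<lambda>\<^sub>n\<bar>\<parallel>p\<parallel> - \<parallel>p\<parallel>\<bar> + 1\<close>, which tends to
  \<open>\<parallel>p\<parallel> - 1\<close> because \<open>\<bar>\<lambda>\<^sub>n\<bar>\<parallel>p\<parallel> = \<parallel>x\<^sub>n + z\<^sub>n\<parallel> \<longrightarrow> 2 \<le> \<parallel>p\<parallel>\<close>; the bound \<open>\<parallel>x\<^sub>n - p\<parallel> \<ge> \<parallel>p\<parallel> - 1\<close> is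
  trivial. So \<open>x\<^sub>n\<close> and likewise \<open>z\<^sub>n\<close> are minimizing for the distance to \<open>p\<close>.\<close>

lemma setdist_singleton_cball_zero:
  fixes p :: "'a::real_normed_vector"
  assumes "0 \<le> r" and "r \<le> norm p"
  shows "setdist {p} (cball 0 r) = norm p - r"
proof (rule antisym)
  show "norm p - r \<le> setdist {p} (cball 0 r)"
  proof (rule le_setdistI)
    fix a b assume "a \<in> {p}" "b \<in> cball (0::'a) r"
    then show "norm p - r \<le> dist a b"
      using norm_triangle_ineq2[of p b] by (auto simp: dist_norm)
  qed (use assms in auto)
next
  show "setdist {p} (cball 0 r) \<le> norm p - r"
  proof (cases "p = 0")
    case True
    with assms show ?thesis by simp
  next
    case False
    let ?q = "(r / norm p) *\<^sub>R p"
    have "?q \<in> cball 0 r"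
      using assms False by simp
    then have "setdist {p} (cball 0 r) \<le> dist p ?q"
      by (intro setdist_le_dist) auto
    also have "p - ?q = (1 - r / norm p) *\<^sub>R p"
      by (simp add: algebra_simps)
    then have "dist p ?q = (1 - r / norm p) * norm p"
      using assms False by (simp add: dist_norm divide_le_eq)
    also have "\<dots> = norm p - r"
      using False by (simp add: field_simps)
    finally show ?thesis .
  qed
qed

lemma norm_diff_le_if_sum_scaled:
  fixes w v p :: "'a::real_normed_vector"
  assumes "norm v \<le> 1" and "w + v = c *\<^sub>R p"
  shows "norm (w - p) \<le> \<bar>c * norm p - norm p\<bar> + 1"
proof -
  have "w - p = (c - 1) *\<^sub>R p - v"
    using assms(2) by (simp add: algebra_simps)
  then have "norm (w - p) \<le> \<bar>c - 1\<bar> * norm p + norm v"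
    by (metis norm_scaleR norm_triangle_ineq4)
  also have "\<bar>c - 1\<bar> * norm p = \<bar>c * norm p - norm p\<bar>"
    by (metis abs_mult abs_norm_cancel left_diff_distrib mult_1)
  finally show ?thesis
    using assms(1) by simp
qed

lemma tendsto_norm_diff_far_point:
  fixes w v :: "nat \<Rightarrow> 'a::real_normed_vector"
  assumes "norm p \<ge> 2"
    and "\<And>n. norm (w n) \<le> 1" and "\<And>n. norm (v n) \<le> 1"
    and "\<And>n. w n + v n = c n *\<^sub>R p"
    and "(\<lambda>n. c n * norm p) \<longlonglongrightarrow> 2"
  shows "(\<lambda>n. norm (w n - p)) \<longlonglongrightarrow> norm p - 1"
proof (rule tendsto_sandwich)
  show "\<forall>\<^sub>F n in sequentially. norm p - 1 \<le> norm (w n - p)"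
    using assms(2) norm_triangle_ineq3[of p "w _"]
    by (intro always_eventually allI) (smt (verit) norm_minus_commute)
  show "\<forall>\<^sub>F n in sequentially. norm (w n - p) \<le> \<bar>c n * norm p - norm p\<bar> + 1"
    using assms(3,4) by (intro always_eventually allI norm_diff_le_if_sum_scaled)
  have "(\<lambda>n. \<bar>c n * norm p - norm p\<bar> + 1) \<longlonglongrightarrow> \<bar>2 - norm p\<bar> + 1"
    by (intro tendsto_intros assms(5))
  then show "(\<lambda>n. \<bar>c n * norm p - norm p\<bar> + 1) \<longlonglongrightarrow> norm p - 1"
    using assms(1) by simp
qed simp

theorem lemma46:
  fixes B :: "'a::banach set" and p :: 'a
    and x z :: "nat \<Rightarrow> 'a" and lam :: "nat \<Rightarrow> real"
  assumes "B \<subseteq> - cball 0 1" and "B \<noteq> {}"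
    and "setdist B (cball 0 1) \<ge> 1"
    and "UC_property (cball 0 1) B"
    and "p \<in> B" and "setdist {p} (cball 0 1) = setdist B (cball 0 1)"
    and "\<And>n. x n \<in> cball 0 1" and "\<And>n. z n \<in> cball 0 1"
    and "(\<lambda>n. norm ((1/2) *\<^sub>R (x n + z n))) \<longlonglongrightarrow> 1"
    and "\<And>n. x n + z n = \<bar>lam n\<bar> *\<^sub>R p"
  shows "(\<lambda>n. norm (x n - z n)) \<longlonglongrightarrow> 0"
proof -
  have "norm p > 1"
    using assms(1,5) by auto
  then have dist_B: "setdist (cball 0 1) B = norm p - 1"
    using assms(6) setdist_singleton_cball_zero[of 1 p] by (simp add: setdist_sym)
  with assms(3) have "norm p \<ge> 2"
    by (simp add: setdist_sym)
  moreover have "(\<lambda>n. \<bar>lam n\<bar> * norm p) \<longlonglongrightarrow> 2"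
    using tendsto_mult_left[OF assms(9), of 2] by (simp add: assms(10))
  ultimately have "(\<lambda>n. norm (x n - p)) \<longlonglongrightarrow> norm p - 1"
    and "(\<lambda>n. norm (z n - p)) \<longlonglongrightarrow> norm p - 1"
    using tendsto_norm_diff_far_point[of p x z "\<lambda>n. \<bar>lam n\<bar>"]
      tendsto_norm_diff_far_point[of p z x "\<lambda>n. \<bar>lam n\<bar>"] assms(7,8,10)
    by (simp_all add: add.commute)
  then show ?thesis
    using assms(4,5,7,8) dist_B unfolding UC_property_def by force
qed

end
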